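(* $\mathrm{Ndim}(\mathcal F_{\mathrm{aCORE}})\le4m+(8k+4)\log m+4\log(8e)=O(m+k\log m)$.
   Context: $\mathcal A=[m]$, $1\le k\le m$, $\mathcal A_k$ the set of $k$-subsets of $\mathcal A$, $\mathcal E=2^{\mathcal A}$. A profile is $P=(A_1,\dots,A_n)\in\mathcal E^n$, $n\ge1$. For $\alpha,\beta\ge0$, $\mathrm{CORE}_{(\alpha,\beta)}$ maps $P$ to the set of $W\in\mathcal A_k$ such that for every nonempty $W'\subseteq\mathcal A$, $|\{j\in[n]:|A_j\cap W'|>\alpha|A_j\cap W|\}|<\beta\frac{|W'|}{k}n$. $\mathcal F_{\mathrm{aCORE}}=\{\mathrm{CORE}_{(\alpha,\beta)}:\alpha,\beta\ge0\}$. Natarajan dimension: a finite set $\mathcal P$ of profiles is shattered by $\mathcal F$ if there are $f^0,f^1$ with $f^0(P)\ne f^1(P)$ on $\mathcal P$ such that for every $B\subseteq\mathcal P$ some $f\in\mathcal F$ equals $f^0$ on $B$ and $f^1$ on $\mathcal P\setminus B$; $\mathrm{Ndim}$ is the largest size of a shattered set. Logarithms are base 2. *)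

theory Defs
  imports Complex_Main
begin

type_synonym profile = "nat set list"

text \<open>Alternatives are [m] = {1..m}. A profile is a nonempty list of approval sets
  A_j \<subseteq> [m]; voter j corresponds to list index j < length P.\<close>
definition valid_profile :: "nat \<Rightarrow> profile \<Rightarrow> bool" where
  "valid_profile m P \<longleftrightarrow> length P \<ge> 1 \<and> (\<forall>A\<in>set P. A \<subseteq> {1..m})"

definition core_ab :: "nat \<Rightarrow> nat \<Rightarrow> real \<Rightarrow> real \<Rightarrow> profile \<Rightarrow> nat set set" where
  "core_ab m k \<alpha> \<beta> P =
     {W. W \<subseteq> {1..m} \<and> card W = k \<and>
        (\<forall>W'. W' \<subseteq> {1..m} \<and> W' \<noteq> {} \<longrightarrow>
           real (card {j. j < length P \<and> real (card (P ! j \<inter> W')) > \<alpha> * real (card (P ! j \<inter> W))})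
             < \<beta> * real (card W') / real k * real (length P))}"

definition F_aCORE :: "nat \<Rightarrow> nat \<Rightarrow> (profile \<Rightarrow> nat set set) set" where
  "F_aCORE m k = {core_ab m k \<alpha> \<beta> | \<alpha> \<beta>. \<alpha> \<ge> 0 \<and> \<beta> \<ge> 0}"

definition N_shatters :: "nat \<Rightarrow> (profile \<Rightarrow> 'b) set \<Rightarrow> profile set \<Rightarrow> bool" where
  "N_shatters m F Ps \<longleftrightarrow> finite Ps \<and> (\<forall>P\<in>Ps. valid_profile m P) \<and>
     (\<exists>f0 f1. (\<forall>P\<in>Ps. f0 P \<noteq> f1 P) \<and>
        (\<forall>B\<subseteq>Ps. \<exists>f\<in>F. (\<forall>P\<in>B. f P = f0 P) \<and> (\<forall>P\<in>Ps - B. f P = f1 P)))"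

end

theory Submission
  imports Defs
begin

text \<open>
  A Natarajan-shattered set \<open>Ps\<close> forces \<open>2^|Ps|\<close> different restrictions of rules in
  \<open>F_aCORE\<close> to \<open>Ps\<close>, recorded as graphs \<open>Sigma Ps f\<close>. A rule \<open>CORE_(\<alpha>,\<beta>)\<close> depends on \<open>\<alpha>\<close> only
  through which comparisons \<open>\<alpha> b < a\<close> with \<open>a, b \<le> m\<close> hold; these patterns form a chain of
  subsets of \<open>[0,m]\<^sup>2\<close>, so there are at most \<open>(m+1)\<^sup>2 + 1\<close> of them. For a fixed pattern the
  graphs grow with \<open>\<beta>\<close> and form a chain of subsets of \<open>Ps \<times> 2^[m]\<close>, hence there are at most
  \<open>|Ps| 2^m + 1\<close> of them. Thus \<open>2^|Ps| \<le> ((m+1)\<^sup>2 + 1)(|Ps| 2^m + 1)\<close>, which gives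
  \<open>|Ps| \<le> 4m + 12\<close>, already below the claimed bound.
\<close>

lemma card_chain_le:
  assumes "finite S" and "C \<subseteq> Pow S" and "chain\<^sub>\<subseteq> C"
  shows "card C \<le> card S + 1"
proof -
  have "inj_on card C"
  proof (rule inj_onI)
    fix A B assume "A \<in> C" "B \<in> C" "card A = card B"
    moreover have "finite A" "finite B"
      using \<open>A \<in> C\<close> \<open>B \<in> C\<close> assms(1,2) by (auto intro: finite_subset)
    moreover have "A \<subseteq> B \<or> B \<subseteq> A"
      using \<open>A \<in> C\<close> \<open>B \<in> C\<close> \<open>chain\<^sub>\<subseteq> C\<close> unfolding chain_subset_def by blast
    ultimately show "A = B" using card_subset_eq by metis
  qed
  moreover have "card ` C \<subseteq> {0..card S}"
    using assms(1,2) by (auto intro!: card_mono)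
  ultimately have "card C \<le> card {0..card S}"
    by (rule card_inj_on_le) simp
  then show ?thesis by simp
qed

lemma N_shatters_two_power_card_le:
  fixes F :: "(profile \<Rightarrow> 'b set) set"
  assumes "N_shatters m F Ps" and "finite (Sigma Ps ` F)"
  shows "2 ^ card Ps \<le> card (Sigma Ps ` F)"
proof -
  obtain f0 f1 where "finite Ps" and separated: "\<forall>P\<in>Ps. f0 P \<noteq> f1 P"
    and realised: "\<forall>B\<subseteq>Ps. \<exists>f\<in>F. (\<forall>P\<in>B. f P = f0 P) \<and> (\<forall>P\<in>Ps - B. f P = f1 P)"
    using assms(1) unfolding N_shatters_def by auto
  have "\<forall>B\<in>Pow Ps. \<exists>f. f \<in> F \<and> (\<forall>P\<in>Ps. f P = (if P \<in> B then f0 P else f1 P))"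
  proof
    fix B assume "B \<in> Pow Ps"
    then obtain f where "f \<in> F" "\<forall>P\<in>B. f P = f0 P" "\<forall>P\<in>Ps - B. f P = f1 P"
      using realised by (meson PowD)
    then show "\<exists>f. f \<in> F \<and> (\<forall>P\<in>Ps. f P = (if P \<in> B then f0 P else f1 P))"
      by auto
  qed
  then obtain g where g: "\<forall>B\<in>Pow Ps. g B \<in> F \<and> (\<forall>P\<in>Ps. g B P = (if P \<in> B then f0 P else f1 P))"
    by (rule bchoice[THEN exE])
  have "inj_on (\<lambda>B. Sigma Ps (g B)) (Pow Ps)"
  proof (rule inj_onI)
    fix B B' assume B: "B \<in> Pow Ps" "B' \<in> Pow Ps" and "Sigma Ps (g B) = Sigma Ps (g B')"
    then have same: "g B P = g B' P" if "P \<in> Ps" for P using that by blast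
    have "P \<in> B \<longleftrightarrow> P \<in> B'" if "P \<in> Ps" for P
      using g B same[OF that] separated that by (auto split: if_splits)
    then show "B = B'" using B by blast
  qed
  moreover have "(\<lambda>B. Sigma Ps (g B)) ` Pow Ps \<subseteq> Sigma Ps ` F"
    using g by blast
  ultimately have "card (Pow Ps) \<le> card (Sigma Ps ` F)"
    using assms(2) by (rule card_inj_on_le)
  then show ?thesis using \<open>finite Ps\<close> card_Pow by metis
qed

definition ratio_pattern :: "nat \<Rightarrow> real \<Rightarrow> (nat \<times> nat) set" where
  "ratio_pattern m \<alpha> = {(a, b). a \<le> m \<and> b \<le> m \<and> \<alpha> * real b < real a}"

lemma ratio_pattern_antimono:
  assumes "\<alpha> \<le> \<alpha>'"
  shows "ratio_pattern m \<alpha>' \<subseteq> ratio_pattern m \<alpha>"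
proof -
  have "\<alpha> * real b \<le> \<alpha>' * real b" for b using assms by (intro mult_right_mono) auto
  then show ?thesis unfolding ratio_pattern_def by (auto intro: le_less_trans)
qed

lemma finite_ratio_patterns: "finite (range (ratio_pattern m))"
  unfolding ratio_pattern_def by (rule finite_subset[of _ "Pow ({0..m} \<times> {0..m})"]) auto

lemma card_ratio_patterns_le: "card (range (ratio_pattern m)) \<le> (m + 1)\<^sup>2 + 1"
proof -
  have "range (ratio_pattern m) \<subseteq> Pow ({0..m} \<times> {0..m})"
    unfolding ratio_pattern_def by auto
  moreover have "chain\<^sub>\<subseteq> (range (ratio_pattern m))"
    unfolding chain_subset_def by (metis linear ratio_pattern_antimono rangeE)
  ultimately have "card (range (ratio_pattern m)) \<le> card ({0..m} \<times> {0..m}) + 1"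
    by (intro card_chain_le) auto
  then show ?thesis by (simp add: power2_eq_square)
qed

lemma Sigma_core_ab_subset: "Sigma Ps (core_ab m k \<alpha> \<beta>) \<subseteq> Ps \<times> Pow {1..m}"
  unfolding core_ab_def by blast

lemma core_ab_cong_ratio_pattern:
  assumes "ratio_pattern m \<alpha> = ratio_pattern m \<alpha>'"
  shows "core_ab m k \<alpha> \<beta> = core_ab m k \<alpha>' \<beta>"
proof -
  have card_le: "card (A \<inter> W) \<le> m" if "W \<subseteq> {1..m}" for A W :: "nat set"
    using card_mono[OF finite_atLeastAtMost, of "A \<inter> W" 1 m] that by auto
  have same_voters:
    "{j. j < length P \<and> real (card (P ! j \<inter> W')) > \<alpha> * real (card (P ! j \<inter> W))} =
     {j. j < length P \<and> real (card (P ! j \<inter> W')) > \<alpha>' * real (card (P ! j \<inter> W))}"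
    if "W \<subseteq> {1..m}" "W' \<subseteq> {1..m}" for P W W'
    using assms card_le[OF that(1)] card_le[OF that(2)]
    unfolding ratio_pattern_def set_eq_iff by blast
  show ?thesis
    unfolding core_ab_def by (intro ext Collect_cong conj_cong refl) (simp add: same_voters)
qed

lemma core_ab_mono_beta:
  assumes "\<beta> \<le> \<beta>'"
  shows "core_ab m k \<alpha> \<beta> P \<subseteq> core_ab m k \<alpha> \<beta>' P"
proof -
  have "\<beta> * real c / real k * real n \<le> \<beta>' * real c / real k * real n" for c n
    using assms by (intro mult_right_mono divide_right_mono) auto
  then show ?thesis unfolding core_ab_def by (blast intro: less_le_trans)
qed

lemma Sigma_core_ab_comparable:
  assumes "ratio_pattern m \<alpha> = ratio_pattern m \<alpha>'"
  shows "Sigma Ps (core_ab m k \<alpha> \<beta>) \<subseteq> Sigma Ps (core_ab m k \<alpha>' \<beta>') \<or>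
    Sigma Ps (core_ab m k \<alpha>' \<beta>') \<subseteq> Sigma Ps (core_ab m k \<alpha> \<beta>)"
  using core_ab_mono_beta[of \<beta> \<beta>' m k \<alpha>] core_ab_mono_beta[of \<beta>' \<beta> m k \<alpha>]
    core_ab_cong_ratio_pattern[OF assms, of k] by (cases "\<beta> \<le> \<beta>'") auto

definition core_graphs :: "nat \<Rightarrow> nat \<Rightarrow> profile set \<Rightarrow> (nat \<times> nat) set \<Rightarrow> (profile \<times> nat set) set set" where
  "core_graphs m k Ps t = {Sigma Ps (core_ab m k \<alpha> \<beta>) | \<alpha> \<beta>. ratio_pattern m \<alpha> = t}"

lemma core_graphs_subset: "core_graphs m k Ps t \<subseteq> Pow (Ps \<times> Pow {1..m})"
  unfolding core_graphs_def using Sigma_core_ab_subset by blast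

lemma card_core_graphs_le:
  assumes "finite Ps"
  shows "card (core_graphs m k Ps t) \<le> card Ps * 2 ^ m + 1"
proof -
  have "chain\<^sub>\<subseteq> (core_graphs m k Ps t)"
    unfolding chain_subset_def
  proof (intro ballI)
    fix A B assume "A \<in> core_graphs m k Ps t" "B \<in> core_graphs m k Ps t"
    then obtain \<alpha> \<beta> \<alpha>' \<beta>' where "A = Sigma Ps (core_ab m k \<alpha> \<beta>)" "B = Sigma Ps (core_ab m k \<alpha>' \<beta>')"
      and "ratio_pattern m \<alpha> = ratio_pattern m \<alpha>'"
      unfolding core_graphs_def by blast
    then show "A \<subseteq> B \<or> B \<subseteq> A"
      using Sigma_core_ab_comparable by simp
  qed
  then have "card (core_graphs m k Ps t) \<le> card (Ps \<times> Pow {1..m}) + 1"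
    using assms core_graphs_subset by (intro card_chain_le) auto
  then show ?thesis using assms by (simp add: card_cartesian_product card_Pow)
qed

lemma Sigma_F_aCORE_subset:
  "Sigma Ps ` F_aCORE m k \<subseteq> (\<Union>t\<in>range (ratio_pattern m). core_graphs m k Ps t)"
proof
  fix X assume "X \<in> Sigma Ps ` F_aCORE m k"
  then obtain \<alpha> \<beta> where "X = Sigma Ps (core_ab m k \<alpha> \<beta>)"
    unfolding F_aCORE_def by blast
  then have "X \<in> core_graphs m k Ps (ratio_pattern m \<alpha>)"
    unfolding core_graphs_def by blast
  then show "X \<in> (\<Union>t\<in>range (ratio_pattern m). core_graphs m k Ps t)"
    by blast
qed

lemma finite_Sigma_F_aCORE:
  assumes "finite Ps"
  shows "finite (Sigma Ps ` F_aCORE m k)"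
proof (rule finite_subset)
  show "Sigma Ps ` F_aCORE m k \<subseteq> Pow (Ps \<times> Pow {1..m})"
    unfolding F_aCORE_def using Sigma_core_ab_subset by blast
  show "finite (Pow (Ps \<times> Pow {1..m}))"
    using assms by simp
qed

lemma card_Sigma_F_aCORE_le:
  assumes "finite Ps"
  shows "card (Sigma Ps ` F_aCORE m k) \<le> ((m + 1)\<^sup>2 + 1) * (card Ps * 2 ^ m + 1)"
proof -
  let ?G = "\<Union>t\<in>range (ratio_pattern m). core_graphs m k Ps t"
  have "finite ?G"
  proof (rule finite_subset)
    show "?G \<subseteq> Pow (Ps \<times> Pow {1..m})"
      using core_graphs_subset by blast
    show "finite (Pow (Ps \<times> Pow {1..m}))"
      using assms by simp
  qed
  then have "card (Sigma Ps ` F_aCORE m k) \<le> card ?G"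
    using Sigma_F_aCORE_subset by (rule card_mono)
  also have "\<dots> \<le> (\<Sum>t\<in>range (ratio_pattern m). card (core_graphs m k Ps t))"
    using finite_ratio_patterns by (rule card_UN_le)
  also have "\<dots> \<le> card (range (ratio_pattern m)) * (card Ps * 2 ^ m + 1)"
    using sum_bounded_above[of _ "\<lambda>t. card (core_graphs m k Ps t)", OF card_core_graphs_le[OF assms]]
    by simp
  also have "\<dots> \<le> ((m + 1)\<^sup>2 + 1) * (card Ps * 2 ^ m + 1)"
    using card_ratio_patterns_le by (rule mult_le_mono1)
  finally show ?thesis .
qed

lemma square_succ_plus_one_le_two_power: "(n + 1)\<^sup>2 + 1 \<le> (2::nat) ^ (n + 2)"
proof (induction n)
  case (Suc n)
  show ?case
  proof (cases n)
    case (Suc n')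
    then have "(Suc n + 1)\<^sup>2 + 1 \<le> 2 * ((n + 1)\<^sup>2 + 1)"
      by (simp add: power2_eq_square)
    also have "\<dots> \<le> 2 ^ (Suc n + 2)"
      using Suc.IH by simp
    finally show ?thesis .
  qed (simp add: power2_eq_square)
qed simp

lemma double_lt_two_power: "3 \<le> n \<Longrightarrow> 2 * n < (2::nat) ^ n"
  by (induction n rule: dec_induct) auto

lemma le_of_two_power_le_poly:
  fixes d m :: nat
  assumes "2 ^ d \<le> ((m + 1)\<^sup>2 + 1) * (d * 2 ^ m + 1)"
  shows "d \<le> 4 * m + 12"
proof (rule ccontr)
  assume "\<not> d \<le> 4 * m + 12"
  define e where "e = d - (m + 2 + m)"
  have d: "d = e + (m + 2 + m)" and "d + 1 < 2 ^ e"
    using \<open>\<not> d \<le> 4 * m + 12\<close> double_lt_two_power[of e] unfolding e_def by linarith+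
  have "(2::nat) ^ d \<le> 2 ^ (m + 2) * (d * 2 ^ m + 1)"
    using assms square_succ_plus_one_le_two_power[of m] by (meson le_trans mult_le_mono1)
  also have "\<dots> \<le> 2 ^ (m + 2) * ((d + 1) * 2 ^ m)"
    by (intro mult_le_mono2) simp
  also have "\<dots> = (d + 1) * 2 ^ (m + 2 + m)"
    by (simp only: power_add mult_ac)
  also have "\<dots> < 2 ^ e * 2 ^ (m + 2 + m)"
    using \<open>d + 1 < 2 ^ e\<close> by (intro mult_strict_right_mono) auto
  also have "\<dots> = 2 ^ d"
    by (simp add: d power_add)
  finally show False by simp
qed

theorem theorem12:
  fixes m k :: nat and Ps :: "profile set"
  assumes "1 \<le> k" and "k \<le> m"
    and "N_shatters m (F_aCORE m k) Ps"
  shows "real (card Ps) \<le> 4 * real m + (8 * real k + 4) * log 2 (real m) + 4 * log 2 (8 * exp 1)"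
proof -
  have "finite Ps" using assms(3) unfolding N_shatters_def by blast
  have "2 ^ card Ps \<le> card (Sigma Ps ` F_aCORE m k)"
    using N_shatters_two_power_card_le[OF assms(3) finite_Sigma_F_aCORE[OF \<open>finite Ps\<close>]] .
  also have "\<dots> \<le> ((m + 1)\<^sup>2 + 1) * (card Ps * 2 ^ m + 1)"
    using card_Sigma_F_aCORE_le[OF \<open>finite Ps\<close>] .
  finally have "card Ps \<le> 4 * m + 12"
    by (rule le_of_two_power_le_poly)
  moreover have "0 \<le> (8 * real k + 4) * log 2 (real m)"
    using assms(1,2) by simp
  moreover have "3 \<le> log 2 (8 * exp 1)"
  proof -
    have "2 powr 3 \<le> (8 * exp 1 :: real)"
      using exp_ge_add_one_self[of "1::real"] by simp
    then show ?thesis by (simp add: le_log_iff)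
  qed
  ultimately show ?thesis by linarith
qed

end
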